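(* Let $m\in\mathbb{N}$ and $V\in H_{+}^{-m}$ be a 1-periodic complex-valued distribution. Then the sesquilinear forms $$t_{\pm}[u,v]:=\langle D_{\pm}^{2m}u,v\rangle_{\pm}+\langle V(x)u,v\rangle_{\pm},\qquad\mathrm{Dom}(t_{\pm})=H_{\pm}^{m},$$ are densely defined, closed and sectorial in the Hilbert space $L_{2}(0,1)$.
   Context: For $s\in\mathbb{R}$, $H_{+}^{s}$ is the space of formal series $f=\sum_{k\in\mathbb{Z}}\widehat f(2k)e^{i2k\pi x}$ with $\|f\|_{H_+^s}^2=\sum_k\langle 2k\rangle^{2s}|\widehat f(2k)|^2<\infty$, and $H_{-}^{s}$ is the space of formal series $f=\sum_{k}\widehat f(2k+1)e^{i(2k+1)\pi x}$ with $\|f\|_{H_-^s}^2=\sum_k\langle 2k+1\rangle^{2s}|\widehat f(2k+1)|^2<\infty$, where $\langle k\rangle=1+|k|$; $H_\pm^0=L_2(0,1)$. $\langle\cdot,\cdot\rangle_{\pm}$ is the pairing between $H_\pm^{s}$ and $H_\pm^{-s}$ extending the $L_2(0,1)$ inner product. $D_\pm^{2m}=|{-i\,d/dx}|^{2m}$ acts as multiplication by $(n\pi)^{2m}$ on the mode $e^{in\pi x}$. For $u\in H_\pm^{m}$, $V(x)u=\sum_n\big(\sum_j\widehat V(n-j)\widehat u(j)\big)e^{in\pi x}\in H_\pm^{-m}$. Closedness and sectoriality of forms are in the sense of Kato. *)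

theory Defs
  imports "HOL-Analysis.Analysis"
begin

text \<open>A formal series sum_n f(n) e^{i n pi x} is represented by its
coefficient function f :: int => complex. The periodic (+) spaces use even modes,
the antiperiodic (-) spaces use odd modes.\<close>

definition Pplus :: "int set" where "Pplus = {n. even n}"
definition Pminus :: "int set" where "Pminus = {n. odd n}"

definition bracket :: "int \<Rightarrow> real" where "bracket n = 1 + real_of_int \<bar>n\<bar>"

definition sob :: "int set \<Rightarrow> real \<Rightarrow> (int \<Rightarrow> complex) set" where
  "sob P s = {f. (\<forall>n. n \<notin> P \<longrightarrow> f n = 0) \<and>
      (\<lambda>n. bracket n powr (2 * s) * (cmod (f n))\<^sup>2) summable_on UNIV}"

text \<open>L_2(0,1) norm (Parseval, modes are orthonormal).\<close>
definition l2norm :: "(int \<Rightarrow> complex) \<Rightarrow> real" where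
  "l2norm f = sqrt (\<Sum>\<^sub>\<infinity>n. (cmod (f n))\<^sup>2)"

definition pairing :: "(int \<Rightarrow> complex) \<Rightarrow> (int \<Rightarrow> complex) \<Rightarrow> complex" where
  "pairing f g = (\<Sum>\<^sub>\<infinity>n. f n * cnj (g n))"

definition Dpow :: "nat \<Rightarrow> (int \<Rightarrow> complex) \<Rightarrow> (int \<Rightarrow> complex)" where
  "Dpow m u = (\<lambda>n. complex_of_real ((real_of_int n * pi) ^ (2 * m)) * u n)"

text \<open>Multiplication of u by the distribution V (convolution of Fourier coefficients).\<close>
definition mult_distr :: "(int \<Rightarrow> complex) \<Rightarrow> (int \<Rightarrow> complex) \<Rightarrow> (int \<Rightarrow> complex)" where
  "mult_distr V u = (\<lambda>n. \<Sum>\<^sub>\<infinity>j. V (n - j) * u j)"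

definition form_t :: "nat \<Rightarrow> (int \<Rightarrow> complex) \<Rightarrow> (int \<Rightarrow> complex) \<Rightarrow> (int \<Rightarrow> complex) \<Rightarrow> complex" where
  "form_t m V u v = pairing (Dpow m u) v + pairing (mult_distr V u) v"

definition form_well_defined :: "nat \<Rightarrow> (int \<Rightarrow> complex) \<Rightarrow> (int \<Rightarrow> complex) set \<Rightarrow> bool" where
  "form_well_defined m V D \<longleftrightarrow> (\<forall>u\<in>D. \<forall>v\<in>D.
      (\<forall>n. (\<lambda>j. V (n - j) * u j) summable_on UNIV) \<and>
      (\<lambda>n. Dpow m u n * cnj (v n)) summable_on UNIV \<and>
      (\<lambda>n. mult_distr V u n * cnj (v n)) summable_on UNIV)"

definition densely_defined :: "(int \<Rightarrow> complex) set \<Rightarrow> (int \<Rightarrow> complex) set \<Rightarrow> bool" where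
  "densely_defined H D \<longleftrightarrow> D \<subseteq> H \<and> (\<forall>f\<in>H. \<forall>\<epsilon>>0. \<exists>u\<in>D. l2norm (f - u) < \<epsilon>)"

definition sectorial_form :: "(int \<Rightarrow> complex) set \<Rightarrow> (int \<Rightarrow> complex) set
    \<Rightarrow> ((int \<Rightarrow> complex) \<Rightarrow> (int \<Rightarrow> complex) \<Rightarrow> complex) \<Rightarrow> bool" where
  "sectorial_form H D t \<longleftrightarrow> D \<subseteq> H \<and> (\<exists>\<gamma>::real. \<exists>\<theta>::real. 0 \<le> \<theta> \<and> \<theta> < pi / 2 \<and>
      (\<forall>u\<in>D. l2norm u = 1 \<longrightarrow>
         t u u = complex_of_real \<gamma> \<or> \<bar>Arg (t u u - complex_of_real \<gamma>)\<bar> \<le> \<theta>))"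

definition closed_form :: "(int \<Rightarrow> complex) set \<Rightarrow> (int \<Rightarrow> complex) set
    \<Rightarrow> ((int \<Rightarrow> complex) \<Rightarrow> (int \<Rightarrow> complex) \<Rightarrow> complex) \<Rightarrow> bool" where
  "closed_form H D t \<longleftrightarrow> D \<subseteq> H \<and> (\<forall>us u. (\<forall>k. us k \<in> D) \<and> u \<in> H \<and>
      (\<lambda>k. l2norm (us k - u)) \<longlonglongrightarrow> 0 \<and>
      (\<forall>\<epsilon>>0. \<exists>N. \<forall>k\<ge>N. \<forall>l\<ge>N. cmod (t (us k - us l) (us k - us l)) < \<epsilon>)
      \<longrightarrow> u \<in> D \<and> (\<lambda>k. t (us k - u) (us k - u)) \<longlonglongrightarrow> 0)"

end

theory Submission
  imports Defs
begin

text \<open>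
  On the Fourier side t[u] = <D^(2m) u, u> + <V u, u>, and <D^(2m) u, u> = sum (n pi)^(2m) |u_n|^2 is
  nonnegative and closed on H^m.  The potential term is infinitesimally form-bounded with respect to it:
  Peetre's inequality <n - j>^m <= 2^m (<n>^m + <j>^m), Cauchy-Schwarz and Young's inequality for
  convolutions on Z give |<V u, v>| <= 2^m |V|_(-m) (|v|_1 |u|_m + |u|_1 |v|_m), and for m >= 1 the
  l^1 norm of the coefficients is at most eta |u|_m + c_eta |u|_(L_2) for every eta > 0.  Hence
  |<V u, u>| <= 1/2 <D^(2m) u, u> + C |u|^2, which gives sectoriality with vertex -(C + 1) and, as in
  the KLMN theorem, closedness: form-Cauchy sequences are Cauchy for <D^(2m) . , .>, and Fatou's lemma on
  the Fourier coefficients identifies the limit.  Trigonometric polynomials are dense.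
\<close>

section \<open>Nonnegative infinite sums\<close>

lemma infsum_mult_le_sqrt:
  fixes f g :: "'a \<Rightarrow> real"
  assumes f0: "\<And>x. f x \<ge> 0" and g0: "\<And>x. g x \<ge> 0"
    and sf: "(\<lambda>x. (f x)\<^sup>2) summable_on A" and sg: "(\<lambda>x. (g x)\<^sup>2) summable_on A"
  shows "(\<lambda>x. f x * g x) summable_on A"
    and "(\<Sum>\<^sub>\<infinity>x\<in>A. f x * g x) \<le> sqrt (\<Sum>\<^sub>\<infinity>x\<in>A. (f x)\<^sup>2) * sqrt (\<Sum>\<^sub>\<infinity>x\<in>A. (g x)\<^sup>2)"
proof -
  have "(\<lambda>x. (f x)\<^sup>2 + (g x)\<^sup>2) summable_on A"
    using sf sg by (rule summable_on_add)
  then show fg: "(\<lambda>x. f x * g x) summable_on A"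
  proof (rule summable_on_comparison_test)
    fix x
    show "0 \<le> f x * g x" using f0 g0 by simp
    then show "f x * g x \<le> (f x)\<^sup>2 + (g x)\<^sup>2"
      using sum_squares_bound[of "f x" "g x"] by linarith
  qed
  show "(\<Sum>\<^sub>\<infinity>x\<in>A. f x * g x) \<le> sqrt (\<Sum>\<^sub>\<infinity>x\<in>A. (f x)\<^sup>2) * sqrt (\<Sum>\<^sub>\<infinity>x\<in>A. (g x)\<^sup>2)"
  proof (rule infsum_le_finite_sums[OF fg])
    fix F assume F: "finite F" "F \<subseteq> A"
    have "(\<Sum>x\<in>F. f x * g x) \<le> sqrt ((\<Sum>x\<in>F. (f x)\<^sup>2) * (\<Sum>x\<in>F. (g x)\<^sup>2))"
      by (rule real_le_rsqrt[OF Cauchy_Schwarz_ineq_sum])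
    also have "\<dots> \<le> sqrt ((\<Sum>\<^sub>\<infinity>x\<in>A. (f x)\<^sup>2) * (\<Sum>\<^sub>\<infinity>x\<in>A. (g x)\<^sup>2))"
      using F by (intro real_sqrt_le_mono mult_mono finite_sum_le_infsum sf sg sum_nonneg infsum_nonneg) auto
    finally show "(\<Sum>x\<in>F. f x * g x) \<le> sqrt (\<Sum>\<^sub>\<infinity>x\<in>A. (f x)\<^sup>2) * sqrt (\<Sum>\<^sub>\<infinity>x\<in>A. (g x)\<^sup>2)"
      by (simp add: real_sqrt_mult)
  qed
qed

lemma infsum_swap_nonneg:
  fixes f :: "'a \<Rightarrow> 'b \<Rightarrow> real"
  assumes f0: "\<And>x y. f x y \<ge> 0"
    and rows: "\<And>y. (\<lambda>x. f x y) summable_on UNIV"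
    and sums: "(\<lambda>y. \<Sum>\<^sub>\<infinity>x. f x y) summable_on UNIV"
  shows "(\<lambda>x. \<Sum>\<^sub>\<infinity>y. f x y) summable_on UNIV"
    and "(\<Sum>\<^sub>\<infinity>x. \<Sum>\<^sub>\<infinity>y. f x y) = (\<Sum>\<^sub>\<infinity>y. \<Sum>\<^sub>\<infinity>x. f x y)"
proof -
  have "(\<lambda>(y, x). f x y) summable_on UNIV \<times> UNIV"
    using summable_on_SigmaI[where f = "\<lambda>(y, x). f x y" and A = UNIV and B = "\<lambda>_. UNIV"
        and g = "\<lambda>y. \<Sum>\<^sub>\<infinity>x. f x y"] rows sums f0 by auto
  then have prod: "(\<lambda>(x, y). f x y) summable_on UNIV \<times> UNIV"
    by (subst summable_on_swap) simp
  show "(\<lambda>x. \<Sum>\<^sub>\<infinity>y. f x y) summable_on UNIV"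
    using summable_on_Sigma_banach[OF prod] by simp
  show "(\<Sum>\<^sub>\<infinity>x. \<Sum>\<^sub>\<infinity>y. f x y) = (\<Sum>\<^sub>\<infinity>y. \<Sum>\<^sub>\<infinity>x. f x y)"
    by (rule infsum_swap_banach[OF prod])
qed

lemma infsum_le_of_pointwise_limit:
  fixes f :: "nat \<Rightarrow> 'a \<Rightarrow> real"
  assumes lim: "\<And>x. (\<lambda>l. f l x) \<longlonglongrightarrow> g x" and f0: "\<And>l x. f l x \<ge> 0"
    and bound: "\<forall>\<^sub>F l in sequentially. f l summable_on UNIV \<and> (\<Sum>\<^sub>\<infinity>x. f l x) \<le> \<epsilon>"
  shows "g summable_on UNIV" and "(\<Sum>\<^sub>\<infinity>x. g x) \<le> \<epsilon>"
proof -
  have g0: "g x \<ge> 0" for x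
    by (rule LIMSEQ_le_const[OF lim]) (use f0 in auto)
  have partial: "sum g F \<le> \<epsilon>" if "finite F" for F
  proof (rule LIMSEQ_le_const2)
    show "(\<lambda>l. sum (f l) F) \<longlonglongrightarrow> sum g F"
      by (intro tendsto_sum lim)
    show "\<exists>N. \<forall>l\<ge>N. sum (f l) F \<le> \<epsilon>"
      using bound unfolding eventually_sequentially
      by (metis finite_sum_le_infsum f0 order.trans subset_UNIV \<open>finite F\<close>)
  qed
  show g: "g summable_on UNIV"
    by (rule nonneg_bdd_above_summable_on) (use g0 partial in \<open>auto intro!: bdd_aboveI2\<close>)
  show "(\<Sum>\<^sub>\<infinity>x. g x) \<le> \<epsilon>"
    by (rule infsum_le_finite_sums[OF g partial])
qed

lemma infsum_tail_small:
  fixes f :: "'a \<Rightarrow> real"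
  assumes sf: "f summable_on UNIV" and e: "\<epsilon> > 0"
  shows "\<exists>F. finite F \<and> (\<Sum>\<^sub>\<infinity>x\<in>- F. f x) \<le> \<epsilon>"
proof -
  obtain F where F: "finite F" "dist (sum f F) (infsum f UNIV) \<le> \<epsilon>"
    using infsum_finite_approximation[OF sf e] by blast
  have "infsum f UNIV = sum f F + infsum f (- F)"
    using infsum_Un_disjoint[OF _ summable_on_subset[OF sf], of F "- F"] F(1)
    by (simp add: Compl_partition)
  then show ?thesis using F by (auto simp: dist_real_def)
qed

section \<open>Convolution on the integers\<close>

lemma summable_on_reflect_shift_int:
  fixes h :: "int \<Rightarrow> 'b::{comm_monoid_add,t2_space}"
  shows "(\<lambda>j. h (c - j)) summable_on UNIV \<longleftrightarrow> h summable_on UNIV"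
  by (rule summable_on_reindex_bij_witness[of _ "\<lambda>j. c - j" "\<lambda>j. c - j"]) simp_all

lemma infsum_reflect_shift_int:
  fixes h :: "int \<Rightarrow> 'b::{comm_monoid_add,t2_space}"
  shows "(\<Sum>\<^sub>\<infinity>j. h (c - j)) = (\<Sum>\<^sub>\<infinity>j. h j)"
  by (rule infsum_reindex_bij_witness[of _ "\<lambda>j. c - j" "\<lambda>j. c - j"]) simp_all

definition int_conv :: "(int \<Rightarrow> real) \<Rightarrow> (int \<Rightarrow> real) \<Rightarrow> int \<Rightarrow> real" where
  "int_conv \<phi> y n = (\<Sum>\<^sub>\<infinity>j. \<phi> (n - j) * y j)"

context
  fixes \<phi> y :: "int \<Rightarrow> real"
  assumes \<phi>0: "\<And>k. \<phi> k \<ge> 0" and y0: "\<And>k. y k \<ge> 0"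
    and s\<phi>: "(\<lambda>k. (\<phi> k)\<^sup>2) summable_on UNIV" and sy: "(\<lambda>k. (y k)\<^sup>2) summable_on UNIV"
begin

lemma int_conv_summable: "(\<lambda>j. \<phi> (n - j) * y j) summable_on UNIV"
  and int_conv_le: "int_conv \<phi> y n \<le> sqrt (\<Sum>\<^sub>\<infinity>k. (\<phi> k)\<^sup>2) * sqrt (\<Sum>\<^sub>\<infinity>k. (y k)\<^sup>2)"
proof -
  have "(\<lambda>j. (\<phi> (n - j))\<^sup>2) summable_on UNIV"
    using s\<phi> summable_on_reflect_shift_int[of "\<lambda>k. (\<phi> k)\<^sup>2"] by simp
  note cs = infsum_mult_le_sqrt[OF \<phi>0 y0 this sy]
  show "(\<lambda>j. \<phi> (n - j) * y j) summable_on UNIV" by (rule cs(1))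
  show "int_conv \<phi> y n \<le> sqrt (\<Sum>\<^sub>\<infinity>k. (\<phi> k)\<^sup>2) * sqrt (\<Sum>\<^sub>\<infinity>k. (y k)\<^sup>2)"
    using cs(2) unfolding int_conv_def infsum_reflect_shift_int[of "\<lambda>k. (\<phi> k)\<^sup>2"] .
qed

lemma int_conv_nonneg: "int_conv \<phi> y n \<ge> 0"
  unfolding int_conv_def by (intro infsum_nonneg) (simp add: \<phi>0 y0)

lemma infsum_mult_int_conv_le:
  fixes x :: "int \<Rightarrow> real"
  assumes x0: "\<And>k. x k \<ge> 0" and sx: "x summable_on UNIV"
  shows "(\<lambda>n. x n * int_conv \<phi> y n) summable_on UNIV"
    and "(\<Sum>\<^sub>\<infinity>n. x n * int_conv \<phi> y n)
           \<le> (\<Sum>\<^sub>\<infinity>n. x n) * (sqrt (\<Sum>\<^sub>\<infinity>k. (\<phi> k)\<^sup>2) * sqrt (\<Sum>\<^sub>\<infinity>k. (y k)\<^sup>2))"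
proof -
  define C where "C = sqrt (\<Sum>\<^sub>\<infinity>k. (\<phi> k)\<^sup>2) * sqrt (\<Sum>\<^sub>\<infinity>k. (y k)\<^sup>2)"
  have le: "x n * int_conv \<phi> y n \<le> x n * C" for n
    unfolding C_def by (intro mult_left_mono int_conv_le x0)
  have sxC: "(\<lambda>n. x n * C) summable_on UNIV" by (rule summable_on_cmult_left[OF sx])
  show s: "(\<lambda>n. x n * int_conv \<phi> y n) summable_on UNIV"
    by (rule summable_on_comparison_test[OF sxC le]) (simp add: x0 int_conv_nonneg)
  have "(\<Sum>\<^sub>\<infinity>n. x n * int_conv \<phi> y n) \<le> (\<Sum>\<^sub>\<infinity>n. x n * C)"
    by (rule infsum_mono[OF s sxC le])
  also have "\<dots> = (\<Sum>\<^sub>\<infinity>n. x n) * C" by (rule infsum_cmult_left[OF sx])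
  finally show "(\<Sum>\<^sub>\<infinity>n. x n * int_conv \<phi> y n) \<le> (\<Sum>\<^sub>\<infinity>n. x n) * C" .
qed

end

lemma infsum_mult_int_conv_l1_le:
  fixes \<phi> x y :: "int \<Rightarrow> real"
  assumes \<phi>0: "\<And>k. \<phi> k \<ge> 0" and x0: "\<And>k. x k \<ge> 0" and y0: "\<And>k. y k \<ge> 0"
    and s\<phi>: "(\<lambda>k. (\<phi> k)\<^sup>2) summable_on UNIV" and sy: "(\<lambda>k. (y k)\<^sup>2) summable_on UNIV"
    and sx: "x summable_on UNIV"
  shows "(\<lambda>n. y n * int_conv \<phi> x n) summable_on UNIV"
    and "(\<Sum>\<^sub>\<infinity>n. y n * int_conv \<phi> x n)
           \<le> (\<Sum>\<^sub>\<infinity>n. x n) * (sqrt (\<Sum>\<^sub>\<infinity>k. (\<phi> k)\<^sup>2) * sqrt (\<Sum>\<^sub>\<infinity>k. (y k)\<^sup>2))"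
proof -
  \<comment> \<open>Tonelli turns this into the previous lemma for the reflected kernel.\<close>
  define \<psi> where "\<psi> k = \<phi> (- k)" for k
  have \<psi>0: "\<psi> k \<ge> 0" for k unfolding \<psi>_def by (rule \<phi>0)
  have s\<psi>: "(\<lambda>k. (\<psi> k)\<^sup>2) summable_on UNIV"
    using s\<phi> summable_on_reflect_shift_int[of "\<lambda>k. (\<phi> k)\<^sup>2" 0] by (simp add: \<psi>_def)
  have \<psi>\<phi>: "(\<Sum>\<^sub>\<infinity>k. (\<psi> k)\<^sup>2) = (\<Sum>\<^sub>\<infinity>k. (\<phi> k)\<^sup>2)"
    using infsum_reflect_shift_int[of "\<lambda>k. (\<phi> k)\<^sup>2" 0] by (simp add: \<psi>_def)
  define f where "f n j = y n * (\<phi> (n - j) * x j)" for n j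
  have col: "(\<Sum>\<^sub>\<infinity>n. f n j) = x j * int_conv \<psi> y j" for j
    unfolding f_def int_conv_def \<psi>_def
    by (subst infsum_cmult_right'[symmetric]) (simp add: algebra_simps)
  have row: "(\<Sum>\<^sub>\<infinity>j. f n j) = y n * int_conv \<phi> x n" for n
    unfolding f_def int_conv_def by (rule infsum_cmult_right')
  have col_summable: "(\<lambda>n. f n j) summable_on UNIV" for j
    using summable_on_cmult_right[OF int_conv_summable[OF \<psi>0 y0 s\<psi> sy, of j], of "x j"]
    by (simp add: f_def \<psi>_def algebra_simps)
  note main = infsum_mult_int_conv_le[OF \<psi>0 y0 s\<psi> sy x0 sx]
  note swap = infsum_swap_nonneg[of f, OF _ col_summable]
  show "(\<lambda>n. y n * int_conv \<phi> x n) summable_on UNIV"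
    using swap(1) main(1) unfolding row col by (simp add: f_def x0 y0 \<phi>0)
  have "(\<Sum>\<^sub>\<infinity>n. y n * int_conv \<phi> x n) = (\<Sum>\<^sub>\<infinity>j. x j * int_conv \<psi> y j)"
    using swap(2) main(1) unfolding row col by (simp add: f_def x0 y0 \<phi>0)
  also have "\<dots> \<le> (\<Sum>\<^sub>\<infinity>n. x n) * (sqrt (\<Sum>\<^sub>\<infinity>k. (\<phi> k)\<^sup>2) * sqrt (\<Sum>\<^sub>\<infinity>k. (y k)\<^sup>2))"
    using main(2) unfolding \<psi>\<phi> .
  finally show "(\<Sum>\<^sub>\<infinity>n. y n * int_conv \<phi> x n)
      \<le> (\<Sum>\<^sub>\<infinity>n. x n) * (sqrt (\<Sum>\<^sub>\<infinity>k. (\<phi> k)\<^sup>2) * sqrt (\<Sum>\<^sub>\<infinity>k. (y k)\<^sup>2))" .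
qed

section \<open>Sobolev norms of Fourier coefficients\<close>

lemma bracket_ge_1: "bracket n \<ge> 1"
  unfolding bracket_def by simp

lemma bracket_pos: "bracket n > 0"
  using bracket_ge_1[of n] by simp

lemma bracket_diff_power_le: "bracket (n - j) ^ m \<le> 2 ^ m * (bracket n ^ m + bracket j ^ m)"
proof -
  have "bracket (n - j) \<le> bracket n + bracket j"
    unfolding bracket_def by simp
  also have "\<dots> \<le> 2 * max (bracket n) (bracket j)"
    by simp
  finally have "bracket (n - j) \<le> 2 * max (bracket n) (bracket j)" .
  then have "bracket (n - j) ^ m \<le> (2 * max (bracket n) (bracket j)) ^ m"
    using bracket_pos[of "n - j"] by (intro power_mono) auto
  also have "\<dots> = 2 ^ m * max (bracket n) (bracket j) ^ m"
    by (simp add: power_mult_distrib)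
  also have "\<dots> \<le> 2 ^ m * (bracket n ^ m + bracket j ^ m)"
    using bracket_pos[of n] bracket_pos[of j] by (auto simp: max_def)
  finally show ?thesis .
qed

lemma bracket_power_sq_le: "(bracket n ^ m)\<^sup>2 \<le> 4 ^ m * ((real_of_int n * pi) ^ (2 * m) + 1)"
proof -
  define a where "a = \<bar>real_of_int n\<bar>"
  have a0: "a \<ge> 0" unfolding a_def by simp
  have "(bracket n ^ m)\<^sup>2 = (1 + a) ^ (2 * m)"
    unfolding bracket_def a_def by (simp add: power_mult[symmetric] mult.commute)
  also have "\<dots> \<le> (2 * max 1 a) ^ (2 * m)"
    using a0 by (intro power_mono) auto
  also have "\<dots> = 4 ^ m * max 1 a ^ (2 * m)"
    by (simp add: power_mult_distrib power_mult)
  also have "max 1 a ^ (2 * m) \<le> (a * pi) ^ (2 * m) + 1"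
  proof (cases "a \<le> 1")
    case True
    then show ?thesis using a0 by (simp add: max_def)
  next
    case False
    then have "max 1 a ^ (2 * m) = a ^ (2 * m)" by (simp add: max_def)
    also have "\<dots> \<le> (a * pi) ^ (2 * m)"
      using False pi_ge_two by (intro power_mono) (auto simp: mult_le_cancel_left1)
    finally show ?thesis by simp
  qed
  also have "(a * pi) ^ (2 * m) = (real_of_int n * pi) ^ (2 * m)"
    unfolding a_def by (simp add: power_mult power_mult_distrib)
  finally show ?thesis by simp
qed

lemma frequency_power_le: "(real_of_int n * pi) ^ (2 * m) \<le> pi ^ (2 * m) * (bracket n ^ m)\<^sup>2"
proof -
  have "(real_of_int n * pi) ^ (2 * m) = (\<bar>real_of_int n\<bar> * pi) ^ (2 * m)"
    by (simp add: power_mult power_mult_distrib)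
  also have "\<dots> \<le> (bracket n * pi) ^ (2 * m)"
    unfolding bracket_def by (intro power_mono mult_right_mono) auto
  also have "\<dots> = pi ^ (2 * m) * (bracket n ^ m)\<^sup>2"
    by (simp add: power_mult_distrib power_mult[symmetric] mult.commute)
  finally show ?thesis .
qed

lemma summable_inverse_bracket_power:
  assumes "m \<ge> 1"
  shows "(\<lambda>k. (1 / bracket k ^ m)\<^sup>2) summable_on UNIV"
proof -
  have "summable (\<lambda>n::nat. inverse (real n ^ 2))"
    by (rule inverse_power_summable) simp
  then have "summable (\<lambda>n. inverse (real (Suc n) ^ 2))"
    by (subst summable_Suc_iff)
  then have nat: "(\<lambda>n. inverse (real (Suc n) ^ 2)) summable_on UNIV"
    by (subst summable_on_UNIV_nonneg_real_iff) auto
  have pos: "(\<lambda>k. inverse (bracket k ^ 2)) summable_on range int"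
    by (subst summable_on_reindex) (use nat in \<open>simp_all add: o_def bracket_def add.commute\<close>)
  have neg: "(\<lambda>k. inverse (bracket k ^ 2)) summable_on range (\<lambda>n. - int n)"
    by (subst summable_on_reindex) (use nat in \<open>simp_all add: o_def bracket_def add.commute inj_on_def\<close>)
  have "k \<in> range int \<union> range (\<lambda>n. - int n)" for k :: int
  proof (cases "k \<ge> 0")
    case True
    then have "k = int (nat k)" by simp
    then show ?thesis by blast
  next
    case False
    then have "k = - int (nat (- k))" by simp
    then show ?thesis by blast
  qed
  then have "range int \<union> range (\<lambda>n. - int n) = (UNIV :: int set)"
    by blast
  then have "(\<lambda>k. inverse (bracket k ^ 2)) summable_on UNIV"
    using summable_on_union[OF pos neg] by simp
  then show ?thesis
  proof (rule summable_on_comparison_test)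
    fix k
    have "bracket k ^ 1 \<le> bracket k ^ m"
      using assms bracket_ge_1[of k] by (intro power_increasing) auto
    then have "bracket k ^ 2 \<le> (bracket k ^ m)\<^sup>2"
      using bracket_pos[of k] by (intro power_mono) auto
    then show "(1 / bracket k ^ m)\<^sup>2 \<le> inverse (bracket k ^ 2)"
      using bracket_pos[of k] by (simp add: power_divide field_simps)
  qed simp
qed

definition hsummable :: "nat \<Rightarrow> (int \<Rightarrow> complex) \<Rightarrow> bool" where
  "hsummable m u \<longleftrightarrow> (\<lambda>n. (bracket n ^ m * cmod (u n))\<^sup>2) summable_on UNIV"

definition hnorm2 :: "nat \<Rightarrow> (int \<Rightarrow> complex) \<Rightarrow> real" where
  "hnorm2 m u = (\<Sum>\<^sub>\<infinity>n. (bracket n ^ m * cmod (u n))\<^sup>2)"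

definition dform :: "nat \<Rightarrow> (int \<Rightarrow> complex) \<Rightarrow> real" where
  "dform m u = (\<Sum>\<^sub>\<infinity>n. (real_of_int n * pi) ^ (2 * m) * (cmod (u n))\<^sup>2)"

definition l1norm :: "(int \<Rightarrow> complex) \<Rightarrow> real" where
  "l1norm u = (\<Sum>\<^sub>\<infinity>n. cmod (u n))"

lemma hnorm2_nonneg: "hnorm2 m u \<ge> 0"
  unfolding hnorm2_def by (intro infsum_nonneg) simp

lemma dform_nonneg: "dform m u \<ge> 0"
  unfolding dform_def by (intro infsum_nonneg) (simp add: power_mult)

lemma l2norm_eq_sqrt_hnorm2: "l2norm u = sqrt (hnorm2 0 u)"
  unfolding l2norm_def hnorm2_def by simp

lemma bracket_powr_nat: "bracket n powr (2 * real m) = (bracket n ^ m)\<^sup>2"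
proof -
  have "bracket n powr (2 * real m) = bracket n ^ (2 * m)"
    using powr_realpow[OF bracket_pos, of n "2 * m"] by simp
  then show ?thesis by (simp add: power_mult[symmetric] mult.commute)
qed

lemma sob_nat_iff: "u \<in> sob P (real m) \<longleftrightarrow> (\<forall>n. n \<notin> P \<longrightarrow> u n = 0) \<and> hsummable m u"
  unfolding sob_def hsummable_def bracket_powr_nat by (simp add: power_mult_distrib)

lemma sob_zero_iff: "u \<in> sob P 0 \<longleftrightarrow> (\<forall>n. n \<notin> P \<longrightarrow> u n = 0) \<and> hsummable 0 u"
  using sob_nat_iff[of u P 0] by simp

lemma sob_neg_nat_summable:
  assumes "V \<in> sob P (- real m)"
  shows "(\<lambda>k. (cmod (V k) / bracket k ^ m)\<^sup>2) summable_on UNIV"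
proof -
  have "bracket k powr (2 * - real m) = inverse ((bracket k ^ m)\<^sup>2)" for k
    using bracket_powr_nat[of k m] by (simp add: powr_minus)
  then show ?thesis
    using assms unfolding sob_def by (simp add: power_divide field_simps)
qed

lemma hsummable_mono:
  assumes "k \<le> m" and "hsummable m u"
  shows "hsummable k u"
  using assms(2) unfolding hsummable_def
proof (rule summable_on_comparison_test)
  fix n
  show "(bracket n ^ k * cmod (u n))\<^sup>2 \<le> (bracket n ^ m * cmod (u n))\<^sup>2"
    using assms(1) bracket_ge_1[of n] by (intro power_mono mult_right_mono power_increasing) auto
qed simp

lemma hsummable_diff:
  assumes su: "hsummable m u" and sv: "hsummable m v"
  shows "hsummable m (u - v)" and "hnorm2 m (u - v) \<le> 2 * hnorm2 m u + 2 * hnorm2 m v"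
proof -
  let ?w = "\<lambda>n. bracket n ^ m"
  have le: "(?w n * cmod ((u - v) n))\<^sup>2 \<le> 2 * (?w n * cmod (u n))\<^sup>2 + 2 * (?w n * cmod (v n))\<^sup>2" for n
  proof -
    have "?w n * cmod ((u - v) n) \<le> ?w n * cmod (u n) + ?w n * cmod (v n)"
      using norm_triangle_ineq4[of "u n" "v n"] bracket_pos[of n]
      by (simp add: distrib_left[symmetric])
    then have "(?w n * cmod ((u - v) n))\<^sup>2 \<le> (?w n * cmod (u n) + ?w n * cmod (v n))\<^sup>2"
      using bracket_pos[of n] by (intro power_mono) auto
    then show ?thesis
      using sum_squares_bound[of "?w n * cmod (u n)" "?w n * cmod (v n)"]
      by (simp add: power2_sum)
  qed
  have sR: "(\<lambda>n. 2 * (?w n * cmod (u n))\<^sup>2 + 2 * (?w n * cmod (v n))\<^sup>2) summable_on UNIV"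
    using su sv unfolding hsummable_def by (intro summable_on_add summable_on_cmult_right)
  show s: "hsummable m (u - v)"
    unfolding hsummable_def by (rule summable_on_comparison_test[OF sR le]) simp
  have "hnorm2 m (u - v) \<le> (\<Sum>\<^sub>\<infinity>n. 2 * (?w n * cmod (u n))\<^sup>2 + 2 * (?w n * cmod (v n))\<^sup>2)"
    using s unfolding hsummable_def hnorm2_def by (rule infsum_mono[OF _ sR le])
  also have "\<dots> = 2 * hnorm2 m u + 2 * hnorm2 m v"
    using su sv unfolding hsummable_def hnorm2_def
    by (simp add: infsum_add summable_on_cmult_right infsum_cmult_right)
  finally show "hnorm2 m (u - v) \<le> 2 * hnorm2 m u + 2 * hnorm2 m v" .
qed

lemma sob_diff: "u \<in> sob P (real m) \<Longrightarrow> v \<in> sob P (real m) \<Longrightarrow> u - v \<in> sob P (real m)"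
  unfolding sob_nat_iff using hsummable_diff(1) by simp

lemma sob_nat_subset_sob_zero: "sob P (real m) \<subseteq> sob P 0"
  using hsummable_mono[of 0 m] by (auto simp: sob_zero_iff sob_nat_iff)

lemma dform_summable:
  assumes "hsummable m u"
  shows "(\<lambda>n. (real_of_int n * pi) ^ (2 * m) * (cmod (u n))\<^sup>2) summable_on UNIV"
proof -
  have "(\<lambda>n. pi ^ (2 * m) * (bracket n ^ m * cmod (u n))\<^sup>2) summable_on UNIV"
    using assms unfolding hsummable_def by (rule summable_on_cmult_right)
  then show ?thesis
  proof (rule summable_on_comparison_test)
    fix n
    show "(real_of_int n * pi) ^ (2 * m) * (cmod (u n))\<^sup>2 \<le> pi ^ (2 * m) * (bracket n ^ m * cmod (u n))\<^sup>2"
      using mult_right_mono[OF frequency_power_le, of "(cmod (u n))\<^sup>2" n m]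
      by (simp add: power_mult_distrib mult.assoc)
  qed (simp add: power_mult)
qed

lemma hsummable_of_dform:
  assumes sD: "(\<lambda>n. (real_of_int n * pi) ^ (2 * m) * (cmod (u n))\<^sup>2) summable_on UNIV"
    and sL: "hsummable 0 u"
  shows "hsummable m u" and "hnorm2 m u \<le> 4 ^ m * (dform m u + hnorm2 0 u)"
proof -
  have sL': "(\<lambda>n. (cmod (u n))\<^sup>2) summable_on UNIV" using sL unfolding hsummable_def by simp
  have sR: "(\<lambda>n. 4 ^ m * ((real_of_int n * pi) ^ (2 * m) * (cmod (u n))\<^sup>2 + (cmod (u n))\<^sup>2)) summable_on UNIV"
    by (intro summable_on_cmult_right summable_on_add sD sL')
  have le: "(bracket n ^ m * cmod (u n))\<^sup>2
      \<le> 4 ^ m * ((real_of_int n * pi) ^ (2 * m) * (cmod (u n))\<^sup>2 + (cmod (u n))\<^sup>2)" for n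
    using mult_right_mono[OF bracket_power_sq_le, of "(cmod (u n))\<^sup>2" n m]
    by (simp add: power_mult_distrib algebra_simps)
  show s: "hsummable m u"
    unfolding hsummable_def by (rule summable_on_comparison_test[OF sR le]) simp
  have "hnorm2 m u \<le> (\<Sum>\<^sub>\<infinity>n. 4 ^ m * ((real_of_int n * pi) ^ (2 * m) * (cmod (u n))\<^sup>2 + (cmod (u n))\<^sup>2))"
    using s unfolding hsummable_def hnorm2_def by (rule infsum_mono[OF _ sR le])
  also have "\<dots> = 4 ^ m * (dform m u + hnorm2 0 u)"
    unfolding dform_def hnorm2_def using sD sL'
    by (simp add: infsum_add infsum_cmult_right summable_on_add)
  finally show "hnorm2 m u \<le> 4 ^ m * (dform m u + hnorm2 0 u)" .
qed

lemma hnorm2_le_dform: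
  "hsummable m u \<Longrightarrow> hnorm2 m u \<le> 4 ^ m * (dform m u + hnorm2 0 u)"
  using hsummable_of_dform(2) dform_summable hsummable_mono[of 0 m] by blast

lemma norm_le_sqrt_hnorm2:
  assumes "hsummable m f"
  shows "bracket n ^ m * cmod (f n) \<le> sqrt (hnorm2 m f)"
proof -
  have "(\<Sum>k\<in>{n}. (bracket k ^ m * cmod (f k))\<^sup>2) \<le> hnorm2 m f"
    using assms unfolding hsummable_def hnorm2_def by (intro finite_sum_le_infsum) simp_all
  then show ?thesis using bracket_pos[of n] by (simp add: real_le_rsqrt)
qed

section \<open>Form-boundedness of the potential\<close>

lemma mult_le_weighted_squares:
  fixes x y l :: real
  assumes "l > 0"
  shows "x * y \<le> l / 2 * x\<^sup>2 + 1 / (2 * l) * y\<^sup>2"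
proof -
  have "0 \<le> (l * x - y)\<^sup>2 / l" using assms by simp
  also have "\<dots> = l * x\<^sup>2 - 2 * x * y + y\<^sup>2 / l"
    using assms by (simp add: power2_eq_square field_simps)
  finally show ?thesis by (simp add: field_simps)
qed

lemma l1_summable_on_le:
  assumes m: "m \<ge> 1" and su: "hsummable m u"
  shows "(\<lambda>k. cmod (u k)) summable_on X"
    and "(\<Sum>\<^sub>\<infinity>k\<in>X. cmod (u k))
           \<le> sqrt (\<Sum>\<^sub>\<infinity>k\<in>X. (1 / bracket k ^ m)\<^sup>2) * sqrt (\<Sum>\<^sub>\<infinity>k\<in>X. (bracket k ^ m * cmod (u k))\<^sup>2)"
proof -
  have s1: "(\<lambda>k. (1 / bracket k ^ m)\<^sup>2) summable_on X"
    by (rule summable_on_subset[OF summable_inverse_bracket_power[OF m]]) simp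
  have s2: "(\<lambda>k. (bracket k ^ m * cmod (u k))\<^sup>2) summable_on X"
    using su unfolding hsummable_def by (rule summable_on_subset) simp
  have "0 \<le> 1 / bracket k ^ m" and "0 \<le> bracket k ^ m * cmod (u k)" for k
    using bracket_pos[of k] by simp_all
  note cs = infsum_mult_le_sqrt[OF this s1 s2]
  have eq: "1 / bracket k ^ m * (bracket k ^ m * cmod (u k)) = cmod (u k)" for k
    using bracket_pos[of k] by simp
  show "(\<lambda>k. cmod (u k)) summable_on X"
    and "(\<Sum>\<^sub>\<infinity>k\<in>X. cmod (u k))
           \<le> sqrt (\<Sum>\<^sub>\<infinity>k\<in>X. (1 / bracket k ^ m)\<^sup>2) * sqrt (\<Sum>\<^sub>\<infinity>k\<in>X. (bracket k ^ m * cmod (u k))\<^sup>2)"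
    using cs unfolding eq by simp_all
qed

lemma l1norm_le_hnorm:
  assumes m: "m \<ge> 1" and eta: "\<eta> > 0"
  obtains c where "c \<ge> 0"
    and "\<And>u. hsummable m u \<Longrightarrow> l1norm u \<le> \<eta> * sqrt (hnorm2 m u) + c * sqrt (hnorm2 0 u)"
proof -
  \<comment> \<open>Modes outside a finite set F are controlled by the H^m norm because the tail of the
      weights is small there; the finitely many modes in F by the L_2 norm.\<close>
  obtain F where F: "finite F" "(\<Sum>\<^sub>\<infinity>k\<in>- F. (1 / bracket k ^ m)\<^sup>2) \<le> \<eta>\<^sup>2"
    using infsum_tail_small[OF summable_inverse_bracket_power[OF m], of "\<eta>\<^sup>2"] eta by auto
  have bound: "l1norm u \<le> \<eta> * sqrt (hnorm2 m u) + sqrt (card F) * sqrt (hnorm2 0 u)"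
    if su: "hsummable m u" for u
  proof -
    have sa: "(\<lambda>k. (bracket k ^ m * cmod (u k))\<^sup>2) summable_on UNIV"
      using su unfolding hsummable_def .
    have sb: "(\<lambda>k. (cmod (u k))\<^sup>2) summable_on UNIV"
      using hsummable_mono[OF _ su, of 0] unfolding hsummable_def by simp
    have "(\<Sum>\<^sub>\<infinity>k\<in>- F. (bracket k ^ m * cmod (u k))\<^sup>2) \<le> hnorm2 m u"
      unfolding hnorm2_def by (rule infsum_mono_neutral[OF summable_on_subset[OF sa] sa]) auto
    then have "sqrt (\<Sum>\<^sub>\<infinity>k\<in>- F. (1 / bracket k ^ m)\<^sup>2)
          * sqrt (\<Sum>\<^sub>\<infinity>k\<in>- F. (bracket k ^ m * cmod (u k))\<^sup>2) \<le> \<eta> * sqrt (hnorm2 m u)"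
      using real_sqrt_le_mono[OF F(2)] eta by (intro mult_mono) (simp_all add: infsum_nonneg)
    then have high: "(\<Sum>\<^sub>\<infinity>k\<in>- F. cmod (u k)) \<le> \<eta> * sqrt (hnorm2 m u)"
      using l1_summable_on_le(2)[OF m su, of "- F"] by linarith
    have "(\<Sum>\<^sub>\<infinity>k\<in>F. 1 * cmod (u k)) \<le> sqrt (\<Sum>\<^sub>\<infinity>k\<in>F. 1\<^sup>2) * sqrt (\<Sum>\<^sub>\<infinity>k\<in>F. (cmod (u k))\<^sup>2)"
      by (rule infsum_mult_le_sqrt(2)) (simp_all add: F(1))
    also have "(\<Sum>\<^sub>\<infinity>k\<in>F. (cmod (u k))\<^sup>2) \<le> hnorm2 0 u"
      unfolding hnorm2_def using F(1) by (simp add: finite_sum_le_infsum[OF sb])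
    finally have low: "(\<Sum>\<^sub>\<infinity>k\<in>F. cmod (u k)) \<le> sqrt (card F) * sqrt (hnorm2 0 u)"
      using F(1) by (simp add: mult_left_mono)
    have "l1norm u = (\<Sum>\<^sub>\<infinity>k\<in>F. cmod (u k)) + (\<Sum>\<^sub>\<infinity>k\<in>- F. cmod (u k))"
      unfolding l1norm_def
      using infsum_Un_disjoint[OF l1_summable_on_le(1)[OF m su] l1_summable_on_le(1)[OF m su], of F "- F"]
      by (simp add: Compl_partition)
    then show ?thesis using high low by linarith
  qed
  show ?thesis by (rule that[OF _ bound]) simp
qed

lemma l1norm_mult_hnorm_le:
  assumes m: "m \<ge> 1" and e: "\<epsilon> > 0"
  obtains C where "C \<ge> 0"
    and "\<And>u. hsummable m u \<Longrightarrow> l1norm u * sqrt (hnorm2 m u) \<le> \<epsilon> * hnorm2 m u + C * hnorm2 0 u"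
proof -
  obtain c where "c \<ge> 0"
    and c: "\<And>u. hsummable m u \<Longrightarrow> l1norm u \<le> \<epsilon> / 2 * sqrt (hnorm2 m u) + c * sqrt (hnorm2 0 u)"
    using l1norm_le_hnorm[OF m, of "\<epsilon> / 2"] e by auto
  have bound: "l1norm u * sqrt (hnorm2 m u) \<le> \<epsilon> * hnorm2 m u + c\<^sup>2 / (2 * \<epsilon>) * hnorm2 0 u"
    if su: "hsummable m u" for u
  proof -
    define a s where "a = sqrt (hnorm2 m u)" and "s = sqrt (hnorm2 0 u)"
    have a2: "a\<^sup>2 = hnorm2 m u" and s2: "s\<^sup>2 = hnorm2 0 u"
      unfolding a_def s_def by (simp_all add: hnorm2_nonneg)
    have "l1norm u * a \<le> (\<epsilon> / 2 * a + c * s) * a"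
      using c[OF su] unfolding a_def s_def by (rule mult_right_mono) (simp add: hnorm2_nonneg)
    also have "\<dots> = \<epsilon> / 2 * a\<^sup>2 + a * (c * s)"
      by (simp add: power2_eq_square algebra_simps)
    also have "a * (c * s) \<le> \<epsilon> / 2 * a\<^sup>2 + 1 / (2 * \<epsilon>) * (c * s)\<^sup>2"
      by (rule mult_le_weighted_squares[OF e])
    also have "\<epsilon> / 2 * a\<^sup>2 + (\<epsilon> / 2 * a\<^sup>2 + 1 / (2 * \<epsilon>) * (c * s)\<^sup>2)
        = \<epsilon> * a\<^sup>2 + c\<^sup>2 / (2 * \<epsilon>) * s\<^sup>2"
      by (simp add: power_mult_distrib)
    finally have "l1norm u * a \<le> \<epsilon> * a\<^sup>2 + c\<^sup>2 / (2 * \<epsilon>) * s\<^sup>2"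
      by simp
    then show ?thesis unfolding a2 s2 unfolding a_def .
  qed
  show ?thesis by (rule that[OF _ bound]) (use e in simp)
qed

lemma pairing_Dpow_self:
  assumes "hsummable m u"
  shows "pairing (Dpow m u) u = complex_of_real (dform m u)"
proof -
  have eq: "Dpow m u n * cnj (u n) = complex_of_real ((real_of_int n * pi) ^ (2 * m) * (cmod (u n))\<^sup>2)" for n
    unfolding Dpow_def mult.assoc complex_norm_square[symmetric] by simp
  have "((\<lambda>n. Dpow m u n * cnj (u n)) has_sum complex_of_real (dform m u)) UNIV"
    unfolding eq dform_def by (rule has_sum_of_real[OF has_sum_infsum[OF dform_summable[OF assms]]])
  then show ?thesis unfolding pairing_def by (rule infsumI)
qed

lemma pairing_Dpow_summable:
  assumes su: "hsummable m u" and sv: "hsummable m v"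
  shows "(\<lambda>n. Dpow m u n * cnj (v n)) summable_on UNIV"
proof -
  have "(\<lambda>n. (bracket n ^ m * cmod (u n)) * (bracket n ^ m * cmod (v n))) summable_on UNIV"
    using su sv bracket_pos unfolding hsummable_def by (intro infsum_mult_le_sqrt(1)) (simp_all add: less_imp_le)
  then have "(\<lambda>n. pi ^ (2 * m) * ((bracket n ^ m * cmod (u n)) * (bracket n ^ m * cmod (v n))))
      summable_on UNIV"
    by (rule summable_on_cmult_right)
  then have "(\<lambda>n. norm (Dpow m u n * cnj (v n))) summable_on UNIV"
  proof (rule summable_on_comparison_test)
    fix n
    have "norm (Dpow m u n * cnj (v n)) = (real_of_int n * pi) ^ (2 * m) * (cmod (u n) * cmod (v n))"
      unfolding Dpow_def norm_mult norm_of_real complex_mod_cnj by (simp add: power_mult)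
    also have "\<dots> \<le> pi ^ (2 * m) * (bracket n ^ m)\<^sup>2 * (cmod (u n) * cmod (v n))"
      by (rule mult_right_mono[OF frequency_power_le]) simp
    finally show "norm (Dpow m u n * cnj (v n))
        \<le> pi ^ (2 * m) * ((bracket n ^ m * cmod (u n)) * (bracket n ^ m * cmod (v n)))"
      by (simp add: power2_eq_square algebra_simps)
  qed simp
  then show ?thesis by (simp add: summable_on_iff_abs_summable_on_complex)
qed

text \<open>Peetre's inequality moves the weight of V onto u or onto the output mode.\<close>

lemma mult_distr_norm_le:
  fixes V u :: "int \<Rightarrow> complex" and m :: nat
  defines "\<phi> \<equiv> \<lambda>k. cmod (V k) / bracket k ^ m"
  assumes m: "m \<ge> 1" and sV: "(\<lambda>k. (\<phi> k)\<^sup>2) summable_on UNIV" and su: "hsummable m u"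
  shows "(\<lambda>j. V (n - j) * u j) summable_on UNIV"
    and "cmod (mult_distr V u n)
           \<le> 2 ^ m * (bracket n ^ m * int_conv \<phi> (\<lambda>k. cmod (u k)) n
                      + int_conv \<phi> (\<lambda>k. bracket k ^ m * cmod (u k)) n)"
proof -
  have \<phi>0: "\<phi> k \<ge> 0" for k unfolding \<phi>_def using bracket_pos[of k] by simp
  have sa: "(\<lambda>k. (bracket k ^ m * cmod (u k))\<^sup>2) summable_on UNIV"
    using su unfolding hsummable_def .
  have sb: "(\<lambda>k. (cmod (u k))\<^sup>2) summable_on UNIV"
    using hsummable_mono[OF _ su, of 0] unfolding hsummable_def by simp
  have "0 \<le> cmod (u k)" and "0 \<le> bracket k ^ m * cmod (u k)" for k
    using bracket_pos[of k] by simp_all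
  note s1 = int_conv_summable[OF \<phi>0 this(1) sV sb] and s2 = int_conv_summable[OF \<phi>0 this(2) sV sa]
  have split: "norm (V (n - j) * u j)
      \<le> 2 ^ m * (bracket n ^ m * (\<phi> (n - j) * cmod (u j)) + \<phi> (n - j) * (bracket j ^ m * cmod (u j)))"
    for j
  proof -
    have "norm (V (n - j) * u j) = bracket (n - j) ^ m * (\<phi> (n - j) * cmod (u j))"
      unfolding \<phi>_def norm_mult using bracket_pos[of "n - j"] by simp
    also have "\<dots> \<le> 2 ^ m * (bracket n ^ m + bracket j ^ m) * (\<phi> (n - j) * cmod (u j))"
      by (rule mult_right_mono[OF bracket_diff_power_le]) (simp add: \<phi>0)
    finally show ?thesis by (simp add: algebra_simps)
  qed
  have sR: "(\<lambda>j. 2 ^ m * (bracket n ^ m * (\<phi> (n - j) * cmod (u j)) + \<phi> (n - j) * (bracket j ^ m * cmod (u j))))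
      summable_on UNIV"
    by (intro summable_on_cmult_right summable_on_add s1 s2)
  have abs: "(\<lambda>j. norm (V (n - j) * u j)) summable_on UNIV"
    by (rule summable_on_comparison_test[OF sR split]) simp
  then show "(\<lambda>j. V (n - j) * u j) summable_on UNIV"
    by (simp add: summable_on_iff_abs_summable_on_complex)
  have "cmod (mult_distr V u n) \<le> (\<Sum>\<^sub>\<infinity>j. norm (V (n - j) * u j))"
    unfolding mult_distr_def by (rule norm_infsum_bound[OF abs])
  also have "\<dots> \<le> (\<Sum>\<^sub>\<infinity>j. 2 ^ m * (bracket n ^ m * (\<phi> (n - j) * cmod (u j))
                                  + \<phi> (n - j) * (bracket j ^ m * cmod (u j))))"
    by (rule infsum_mono[OF abs sR split])
  also have "\<dots> = 2 ^ m * (bracket n ^ m * int_conv \<phi> (\<lambda>k. cmod (u k)) n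
                      + int_conv \<phi> (\<lambda>k. bracket k ^ m * cmod (u k)) n)"
    unfolding int_conv_def by (intro infsumI has_sum_cmult_right has_sum_add has_sum_infsum s1 s2)
  finally show "cmod (mult_distr V u n)
      \<le> 2 ^ m * (bracket n ^ m * int_conv \<phi> (\<lambda>k. cmod (u k)) n
                 + int_conv \<phi> (\<lambda>k. bracket k ^ m * cmod (u k)) n)" .
qed

lemma pairing_mult_distr_bound:
  fixes V u v :: "int \<Rightarrow> complex" and m :: nat
  defines "K \<equiv> sqrt (\<Sum>\<^sub>\<infinity>k. (cmod (V k) / bracket k ^ m)\<^sup>2)"
  assumes m: "m \<ge> 1" and sV: "(\<lambda>k. (cmod (V k) / bracket k ^ m)\<^sup>2) summable_on UNIV"
    and su: "hsummable m u" and sv: "hsummable m v"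
  shows "(\<lambda>n. mult_distr V u n * cnj (v n)) summable_on UNIV"
    and "cmod (pairing (mult_distr V u) v)
           \<le> 2 ^ m * K * (l1norm v * sqrt (hnorm2 m u) + l1norm u * sqrt (hnorm2 m v))"
proof -
  define \<phi> where "\<phi> k = cmod (V k) / bracket k ^ m" for k
  define a b where "a w k = bracket k ^ m * cmod (w k)" and "b w k = cmod (w k)"
    for w :: "int \<Rightarrow> complex" and k
  have \<phi>0: "\<phi> k \<ge> 0" and a0: "a w k \<ge> 0" and b0: "b w k \<ge> 0" for w k
    unfolding \<phi>_def a_def b_def using bracket_pos[of k] by simp_all
  have s\<phi>: "(\<lambda>k. (\<phi> k)\<^sup>2) summable_on UNIV" using sV unfolding \<phi>_def .
  have sa: "(\<lambda>k. (a w k)\<^sup>2) summable_on UNIV" and sb: "(\<lambda>k. (b w k)\<^sup>2) summable_on UNIV"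
    and lb: "b w summable_on UNIV" if "hsummable m w" for w
    using that hsummable_mono[OF _ that, of 0] l1_summable_on_le(1)[OF m that, of UNIV]
    unfolding hsummable_def a_def b_def by (simp_all add: fun_eq_iff)
  define maj where "maj n = cmod (v n) * (2 ^ m * (bracket n ^ m * int_conv \<phi> (b u) n + int_conv \<phi> (a u) n))" for n
  have maj_eq: "maj n = 2 ^ m * (a v n * int_conv \<phi> (b u) n + b v n * int_conv \<phi> (a u) n)" for n
    unfolding maj_def a_def b_def by (simp add: algebra_simps)
  note A = infsum_mult_int_conv_l1_le[OF \<phi>0 b0 a0 s\<phi> sa[OF sv] lb[OF su]]
  note B = infsum_mult_int_conv_le[OF \<phi>0 a0 s\<phi> sa[OF su] b0 lb[OF sv]]
  have smaj: "maj summable_on UNIV"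
    unfolding maj_eq by (intro summable_on_cmult_right summable_on_add A(1) B(1))
  have le: "norm (mult_distr V u n * cnj (v n)) \<le> maj n" for n
    using mult_right_mono[OF mult_distr_norm_le(2)[OF m sV su, of n], of "cmod (v n)"]
    unfolding maj_def \<phi>_def a_def b_def by (simp add: norm_mult mult.commute)
  have abs: "(\<lambda>n. norm (mult_distr V u n * cnj (v n))) summable_on UNIV"
    by (rule summable_on_comparison_test[OF smaj le]) simp
  then show "(\<lambda>n. mult_distr V u n * cnj (v n)) summable_on UNIV"
    by (simp add: summable_on_iff_abs_summable_on_complex)
  have "cmod (pairing (mult_distr V u) v) \<le> (\<Sum>\<^sub>\<infinity>n. maj n)"
    unfolding pairing_def by (rule order.trans[OF norm_infsum_bound[OF abs] infsum_mono[OF abs smaj le]])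
  also have "\<dots> = 2 ^ m * ((\<Sum>\<^sub>\<infinity>n. a v n * int_conv \<phi> (b u) n) + (\<Sum>\<^sub>\<infinity>n. b v n * int_conv \<phi> (a u) n))"
    unfolding maj_eq by (intro infsumI has_sum_cmult_right has_sum_add has_sum_infsum A(1) B(1))
  also have "\<dots> \<le> 2 ^ m * ((\<Sum>\<^sub>\<infinity>n. b u n) * (K * sqrt (\<Sum>\<^sub>\<infinity>k. (a v k)\<^sup>2))
                      + (\<Sum>\<^sub>\<infinity>n. b v n) * (K * sqrt (\<Sum>\<^sub>\<infinity>k. (a u k)\<^sup>2)))"
    using A(2) B(2) unfolding K_def \<phi>_def by (intro mult_left_mono add_mono) simp_all
  also have "\<dots> = 2 ^ m * K * (l1norm v * sqrt (hnorm2 m u) + l1norm u * sqrt (hnorm2 m v))"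
    unfolding l1norm_def hnorm2_def a_def b_def by (simp add: algebra_simps)
  finally show "cmod (pairing (mult_distr V u) v)
      \<le> 2 ^ m * K * (l1norm v * sqrt (hnorm2 m u) + l1norm u * sqrt (hnorm2 m v))" .
qed

lemma pairing_mult_distr_self_le:
  fixes V :: "int \<Rightarrow> complex"
  assumes m: "m \<ge> 1" and sV: "(\<lambda>k. (cmod (V k) / bracket k ^ m)\<^sup>2) summable_on UNIV"
    and e: "\<epsilon> > 0"
  obtains C where "C \<ge> 0"
    and "\<And>u. hsummable m u \<Longrightarrow> cmod (pairing (mult_distr V u) u) \<le> \<epsilon> * dform m u + C * hnorm2 0 u"
proof -
  define K where "K = 2 * 2 ^ m * sqrt (\<Sum>\<^sub>\<infinity>k. (cmod (V k) / bracket k ^ m)\<^sup>2)"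
  have K0: "K \<ge> 0" unfolding K_def by (simp add: infsum_nonneg)
  define \<delta> where "\<delta> = \<epsilon> / ((K + 1) * 4 ^ m)"
  have "\<delta> > 0" unfolding \<delta>_def using e K0 by simp
  then obtain C where C0: "C \<ge> 0" and C: "\<And>u. hsummable m u \<Longrightarrow>
      l1norm u * sqrt (hnorm2 m u) \<le> \<delta> * hnorm2 m u + C * hnorm2 0 u"
    using l1norm_mult_hnorm_le[OF m] by blast
  have K\<delta>: "K * \<delta> * 4 ^ m \<le> \<epsilon>"
  proof -
    have "K * \<delta> * 4 ^ m \<le> (K + 1) * \<delta> * 4 ^ m"
      using \<open>\<delta> > 0\<close> by (intro mult_right_mono) simp_all
    also have "\<dots> = \<epsilon>"
      unfolding \<delta>_def using K0 by (simp add: add_nonneg_eq_0_iff)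
    finally show ?thesis .
  qed
  have bound: "cmod (pairing (mult_distr V u) u) \<le> \<epsilon> * dform m u + (\<epsilon> + K * C) * hnorm2 0 u"
    if su: "hsummable m u" for u
  proof -
    have "cmod (pairing (mult_distr V u) u) \<le> K * (l1norm u * sqrt (hnorm2 m u))"
      using pairing_mult_distr_bound(2)[OF m sV su su] unfolding K_def by (simp add: algebra_simps)
    also have "\<dots> \<le> K * (\<delta> * hnorm2 m u + C * hnorm2 0 u)"
      using C[OF su] K0 by (rule mult_left_mono)
    also have "\<dots> \<le> K * (\<delta> * (4 ^ m * (dform m u + hnorm2 0 u)) + C * hnorm2 0 u)"
      using hnorm2_le_dform[OF su] K0 \<open>\<delta> > 0\<close> by (intro mult_left_mono add_right_mono) simp_all
    also have "\<dots> = (K * \<delta> * 4 ^ m) * (dform m u + hnorm2 0 u) + K * C * hnorm2 0 u"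
      by (simp add: algebra_simps)
    also have "\<dots> \<le> \<epsilon> * (dform m u + hnorm2 0 u) + K * C * hnorm2 0 u"
      using K\<delta> dform_nonneg hnorm2_nonneg by (intro add_right_mono mult_right_mono) (simp_all add: add_nonneg_nonneg)
    finally show ?thesis by (simp add: algebra_simps)
  qed
  show ?thesis by (rule that[OF _ bound]) (use e K0 C0 in simp)
qed

section \<open>Sectoriality and closedness\<close>

lemma form_t_self:
  "hsummable m u \<Longrightarrow> form_t m V u u = complex_of_real (dform m u) + pairing (mult_distr V u) u"
  unfolding form_t_def by (simp add: pairing_Dpow_self)

lemma Arg_abs_le_arctan:
  assumes pos: "Re z > 0" and le: "\<bar>Im z\<bar> \<le> M * Re z"
  shows "\<bar>Arg z\<bar> \<le> arctan M"
proof -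
  have "\<bar>Im z\<bar> / Re z \<le> M"
    using le pos_divide_le_eq[OF pos] by simp
  then have "\<bar>Im z / Re z\<bar> \<le> M"
    using abs_div_pos[OF pos, of "Im z"] by simp
  then show ?thesis
    unfolding arg_conv_arctan[OF pos] abs_arctan by (rule arctan_monotone')
qed


lemma pointwise_limit_of_l2_limit:
  fixes us :: "nat \<Rightarrow> int \<Rightarrow> complex"
  assumes su: "\<And>k. hsummable 0 (us k - u)" and lim: "(\<lambda>k. hnorm2 0 (us k - u)) \<longlonglongrightarrow> 0"
  shows "(\<lambda>k. us k n) \<longlonglongrightarrow> u n"
proof -
  have "(\<lambda>k. us k n - u n) \<longlonglongrightarrow> 0"
  proof (rule Lim_null_comparison)
    show "\<forall>\<^sub>F k in sequentially. norm (us k n - u n) \<le> sqrt (hnorm2 0 (us k - u))"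
      using norm_le_sqrt_hnorm2[OF su, where n = n] by simp
    show "(\<lambda>k. sqrt (hnorm2 0 (us k - u))) \<longlonglongrightarrow> 0"
      using tendsto_real_sqrt[OF lim] by simp
  qed
  then show ?thesis by (rule LIM_zero_cancel)
qed

lemma dform_le_of_pointwise_limit:
  fixes us :: "nat \<Rightarrow> int \<Rightarrow> complex"
  assumes lim: "\<And>n. (\<lambda>l. us l n) \<longlonglongrightarrow> u n" and sL: "hsummable 0 (w - u)"
    and bound: "\<And>l. l \<ge> N \<Longrightarrow> hsummable m (w - us l) \<and> dform m (w - us l) \<le> \<epsilon>"
  shows "hsummable m (w - u)" and "dform m (w - u) \<le> \<epsilon>"
proof -
  let ?g = "\<lambda>f n. (real_of_int n * pi) ^ (2 * m) * (cmod (f n))\<^sup>2"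
  have "(\<lambda>l. ?g (w - us l) n) \<longlonglongrightarrow> ?g (w - u) n" for n
    unfolding minus_apply by (intro tendsto_intros lim)
  moreover have "\<forall>\<^sub>F l in sequentially. ?g (w - us l) summable_on UNIV \<and> (\<Sum>\<^sub>\<infinity>n. ?g (w - us l) n) \<le> \<epsilon>"
    using bound dform_summable unfolding dform_def eventually_sequentially by blast
  ultimately have "?g (w - u) summable_on UNIV" and le: "(\<Sum>\<^sub>\<infinity>n. ?g (w - u) n) \<le> \<epsilon>"
    using infsum_le_of_pointwise_limit[of "\<lambda>l. ?g (w - us l)" "?g (w - u)"] by (simp_all add: power_mult)
  then show "hsummable m (w - u)" using hsummable_of_dform(1)[OF _ sL] by simp
  show "dform m (w - u) \<le> \<epsilon>" using le unfolding dform_def .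
qed

text \<open>From here on only the form bound with relative bound 1/2 is used, as in the KLMN theorem.\<close>

context
  fixes m :: nat and V :: "int \<Rightarrow> complex" and C :: real
  assumes C0: "C \<ge> 0"
    and bound: "\<And>u. hsummable m u \<Longrightarrow> cmod (pairing (mult_distr V u) u) \<le> 1 / 2 * dform m u + C * hnorm2 0 u"
begin

lemma dform_le_form_t:
  assumes su: "hsummable m u"
  shows "dform m u \<le> 2 * cmod (form_t m V u u) + 2 * C * hnorm2 0 u"
proof -
  have "dform m u - cmod (pairing (mult_distr V u) u) \<le> Re (form_t m V u u)"
    unfolding form_t_self[OF su] using abs_Re_le_cmod[of "pairing (mult_distr V u) u"] by simp
  also have "\<dots> \<le> cmod (form_t m V u u)" by (rule complex_Re_le_cmod)
  finally show ?thesis using bound[OF su] by linarith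
qed

lemma form_t_le_dform:
  assumes su: "hsummable m u"
  shows "cmod (form_t m V u u) \<le> 3 / 2 * dform m u + C * hnorm2 0 u"
proof -
  have "cmod (form_t m V u u) \<le> cmod (complex_of_real (dform m u)) + cmod (pairing (mult_distr V u) u)"
    unfolding form_t_self[OF su] by (rule norm_triangle_ineq)
  then show ?thesis using bound[OF su] dform_nonneg[of m u] by simp
qed

lemma form_t_sectorial: "sectorial_form (sob P 0) (sob P (real m)) (form_t m V)"
proof -
  have arg_bound: "\<bar>Arg (form_t m V u u - complex_of_real (- (C + 1)))\<bar> \<le> arctan (max 1 C)"
    if u: "u \<in> sob P (real m)" and n1: "l2norm u = 1" for u
  proof -
    have su: "hsummable m u" using u unfolding sob_nat_iff by blast
    have h0: "hnorm2 0 u = 1" using n1 hnorm2_nonneg[of 0 u] unfolding l2norm_eq_sqrt_hnorm2 by simp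
    define b where "b = pairing (mult_distr V u) u"
    have b: "cmod b \<le> dform m u / 2 + C" using bound[OF su] h0 unfolding b_def by simp
    define z where "z = form_t m V u u - complex_of_real (- (C + 1))"
    have z: "z = complex_of_real (dform m u + C + 1) + b"
      unfolding z_def b_def form_t_self[OF su] by simp
    have Re: "Re z \<ge> dform m u / 2 + 1" unfolding z using abs_Re_le_cmod[of b] b by simp
    have "\<bar>Im z\<bar> \<le> dform m u / 2 + C" unfolding z using abs_Im_le_cmod[of b] b by simp
    also have "\<dots> \<le> max 1 C * (dform m u / 2) + max 1 C"
      using mult_right_mono[of 1 "max 1 C" "dform m u / 2"] dform_nonneg[of m u] by simp
    also have "\<dots> = max 1 C * (dform m u / 2 + 1)"
      by (simp add: algebra_simps)
    also have "\<dots> \<le> max 1 C * Re z" using Re by (intro mult_left_mono) auto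
    finally have "\<bar>Im z\<bar> \<le> max 1 C * Re z" .
    moreover have "Re z > 0" using Re dform_nonneg[of m u] by linarith
    ultimately show ?thesis unfolding z_def by (rule Arg_abs_le_arctan[rotated])
  qed
  show ?thesis
    unfolding sectorial_form_def
  proof (rule conjI[OF sob_nat_subset_sob_zero exI[of _ "- (C + 1)"]],
         rule exI[of _ "arctan (max 1 C)"], intro conjI ballI impI disjI2)
    show "0 \<le> arctan (max 1 C)" by simp
    show "arctan (max 1 C) < pi / 2" by (rule arctan_ubound)
  qed (rule arg_bound)
qed

lemma dform_cauchy_of_form_t_cauchy:
  fixes us :: "nat \<Rightarrow> int \<Rightarrow> complex"
  assumes us: "\<And>k. hsummable m (us k)" and su: "\<And>k. hsummable 0 (us k - u)"
    and lim: "(\<lambda>k. hnorm2 0 (us k - u)) \<longlonglongrightarrow> 0"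
    and cauchy: "\<forall>\<epsilon>>0. \<exists>N. \<forall>k\<ge>N. \<forall>l\<ge>N. cmod (form_t m V (us k - us l) (us k - us l)) < \<epsilon>"
    and e: "\<epsilon> > 0"
  shows "\<exists>N. \<forall>k\<ge>N. \<forall>l\<ge>N. dform m (us k - us l) \<le> \<epsilon>"
proof -
  define r where "r = \<epsilon> / (16 * (C + 1))"
  have "r > 0" unfolding r_def using C0 e by simp
  obtain N1 where N1: "\<And>k l. k \<ge> N1 \<Longrightarrow> l \<ge> N1 \<Longrightarrow> cmod (form_t m V (us k - us l) (us k - us l)) < \<epsilon> / 4"
    using cauchy e by (meson zero_less_divide_iff zero_less_numeral)
  obtain N2 where N2: "\<And>k. k \<ge> N2 \<Longrightarrow> hnorm2 0 (us k - u) < r"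
    using order_tendstoD(2)[OF lim \<open>r > 0\<close>] unfolding eventually_sequentially by blast
  have "dform m (us k - us l) \<le> \<epsilon>" if "k \<ge> max N1 N2" "l \<ge> max N1 N2" for k l
  proof -
    have "us k - us l = (us k - u) - (us l - u)" by (simp add: fun_eq_iff)
    then have "hnorm2 0 (us k - us l) \<le> 2 * hnorm2 0 (us k - u) + 2 * hnorm2 0 (us l - u)"
      using hsummable_diff(2)[OF su su] by metis
    also have "\<dots> \<le> 4 * r"
      using N2[of k] N2[of l] that by simp
    finally have "2 * C * hnorm2 0 (us k - us l) \<le> 2 * C * (4 * r)"
      using C0 by (intro mult_left_mono) simp_all
    also have "\<dots> \<le> \<epsilon> / 2"
      unfolding r_def using C0 e by (simp add: field_simps)
    moreover have "cmod (form_t m V (us k - us l) (us k - us l)) < \<epsilon> / 4"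
      using N1[of k l] that by simp
    ultimately show ?thesis
      using dform_le_form_t[OF hsummable_diff(1)[OF us[of k] us[of l]]] by linarith
  qed
  then show ?thesis by blast
qed

lemma dform_limit_of_form_t_cauchy:
  fixes us :: "nat \<Rightarrow> int \<Rightarrow> complex"
  assumes us: "\<And>k. hsummable m (us k)" and su: "\<And>k. hsummable 0 (us k - u)"
    and lim: "(\<lambda>k. hnorm2 0 (us k - u)) \<longlonglongrightarrow> 0"
    and cauchy: "\<forall>\<epsilon>>0. \<exists>N. \<forall>k\<ge>N. \<forall>l\<ge>N. cmod (form_t m V (us k - us l) (us k - us l)) < \<epsilon>"
    and e: "\<epsilon> > 0"
  shows "\<exists>N. \<forall>k\<ge>N. hsummable m (us k - u) \<and> dform m (us k - u) \<le> \<epsilon>"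
proof -
  obtain N where N: "\<And>k l. k \<ge> N \<Longrightarrow> l \<ge> N \<Longrightarrow> dform m (us k - us l) \<le> \<epsilon>"
    using dform_cauchy_of_form_t_cauchy[OF us su lim cauchy e] by blast
  have "hsummable m (us k - u) \<and> dform m (us k - u) \<le> \<epsilon>" if "k \<ge> N" for k
    using dform_le_of_pointwise_limit[OF pointwise_limit_of_l2_limit[OF su lim] su[of k], where N = N and \<epsilon> = \<epsilon>]
      N[OF that] hsummable_diff(1)[OF us us] by blast
  then show ?thesis by blast
qed

lemma form_t_closed: "closed_form (sob P 0) (sob P (real m)) (form_t m V)"
  unfolding closed_form_def
proof (intro conjI allI impI)
  show "sob P (real m) \<subseteq> sob P 0" by (rule sob_nat_subset_sob_zero)
  fix us :: "nat \<Rightarrow> int \<Rightarrow> complex" and u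
  assume H: "(\<forall>k. us k \<in> sob P (real m)) \<and> u \<in> sob P 0 \<and> (\<lambda>k. l2norm (us k - u)) \<longlonglongrightarrow> 0 \<and>
      (\<forall>\<epsilon>>0. \<exists>N. \<forall>k\<ge>N. \<forall>l\<ge>N. cmod (form_t m V (us k - us l) (us k - us l)) < \<epsilon>)"
  have us: "us k \<in> sob P (real m)" for k using H by blast
  then have hus: "hsummable m (us k)" for k unfolding sob_nat_iff by blast
  have "us k - u \<in> sob P 0" for k
    using sob_diff[of "us k" P 0 u] us sob_nat_subset_sob_zero H by auto
  then have su: "hsummable 0 (us k - u)" for k unfolding sob_zero_iff by blast
  have lim: "(\<lambda>k. hnorm2 0 (us k - u)) \<longlonglongrightarrow> 0"
    using tendsto_power[of "\<lambda>k. l2norm (us k - u)" 0 sequentially 2] H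
    by (simp add: l2norm_eq_sqrt_hnorm2 hnorm2_nonneg)
  have cauchy: "\<forall>\<epsilon>>0. \<exists>N. \<forall>k\<ge>N. \<forall>l\<ge>N. cmod (form_t m V (us k - us l) (us k - us l)) < \<epsilon>"
    using H by blast
  note dlim = dform_limit_of_form_t_cauchy[OF hus su lim cauchy]
  then obtain N0 where "hsummable m (us N0 - u)" using zero_less_one by blast
  then have "hsummable m (us N0 - (us N0 - u))" using hsummable_diff(1)[OF hus] by blast
  moreover have "us N0 - (us N0 - u) = u" by (simp add: fun_eq_iff)
  ultimately have "hsummable m u" by simp
  then show u_sob: "u \<in> sob P (real m)" using H unfolding sob_nat_iff sob_zero_iff by blast
  then have huk: "hsummable m (us k - u)" for k
    using sob_diff[OF us u_sob] unfolding sob_nat_iff by blast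
  have "(\<lambda>k. dform m (us k - u)) \<longlonglongrightarrow> 0"
  proof (rule LIMSEQ_I)
    fix r :: real assume "r > 0"
    then obtain N where N: "\<And>k. k \<ge> N \<Longrightarrow> dform m (us k - u) \<le> r / 2" using dlim[of "r / 2"] by auto
    have "norm (dform m (us k - u) - 0) < r" if "k \<ge> N" for k
      using N[OF that] \<open>r > 0\<close> dform_nonneg[of m "us k - u"] by simp
    then show "\<exists>N. \<forall>k\<ge>N. norm (dform m (us k - u) - 0) < r" by blast
  qed
  then have "(\<lambda>k. 3 / 2 * dform m (us k - u) + C * hnorm2 0 (us k - u)) \<longlonglongrightarrow> 0"
    using lim by (intro tendsto_add_zero tendsto_mult_right_zero)
  then show "(\<lambda>k. form_t m V (us k - u) (us k - u)) \<longlonglongrightarrow> 0"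
    by (rule Lim_null_comparison[rotated]) (use form_t_le_dform[OF huk] in simp)
qed

end

section \<open>Density and well-definedness\<close>

lemma sob_nat_dense: "densely_defined (sob P 0) (sob P (real m))"
  unfolding densely_defined_def
proof (intro conjI ballI allI impI)
  show "sob P (real m) \<subseteq> sob P 0" by (rule sob_nat_subset_sob_zero)
  fix f and \<epsilon> :: real
  assume f: "f \<in> sob P 0" and e: "\<epsilon> > 0"
  have sf: "(\<lambda>k. (cmod (f k))\<^sup>2) summable_on UNIV"
    using f unfolding sob_zero_iff hsummable_def by simp
  obtain F where F: "finite F" "(\<Sum>\<^sub>\<infinity>k\<in>- F. (cmod (f k))\<^sup>2) \<le> (\<epsilon> / 2)\<^sup>2"
    using infsum_tail_small[OF sf, of "(\<epsilon> / 2)\<^sup>2"] e by auto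
  define u where "u n = (if n \<in> F then f n else 0)" for n
  have "(\<lambda>k. (bracket k ^ m * cmod (u k))\<^sup>2) summable_on F"
    using F(1) by simp
  then have "hsummable m u"
    unfolding hsummable_def by (rule summable_on_cong_neutral[THEN iffD1, rotated -1]) (auto simp: u_def)
  then have u: "u \<in> sob P (real m)"
    using f unfolding sob_nat_iff sob_zero_iff by (simp add: u_def)
  have "(\<Sum>\<^sub>\<infinity>k. (cmod ((f - u) k))\<^sup>2) = (\<Sum>\<^sub>\<infinity>k\<in>- F. (cmod (f k))\<^sup>2)"
    by (rule infsum_cong_neutral) (auto simp: u_def)
  then have "l2norm (f - u) \<le> sqrt ((\<epsilon> / 2)\<^sup>2)"
    unfolding l2norm_def using real_sqrt_le_mono[OF F(2)] by simp
  also have "\<dots> < \<epsilon>" using e by simp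
  finally show "\<exists>u\<in>sob P (real m). l2norm (f - u) < \<epsilon>" using u by blast
qed

lemma form_t_well_defined:
  assumes m: "m \<ge> 1" and sV: "(\<lambda>k. (cmod (V k) / bracket k ^ m)\<^sup>2) summable_on UNIV"
  shows "form_well_defined m V (sob P (real m))"
  unfolding form_well_defined_def
proof (intro ballI conjI allI)
  fix u v assume "u \<in> sob P (real m)" and "v \<in> sob P (real m)"
  then have su: "hsummable m u" and sv: "hsummable m v" unfolding sob_nat_iff by blast+
  show "(\<lambda>j. V (n - j) * u j) summable_on UNIV" for n
    by (rule mult_distr_norm_le(1)[OF m sV su])
  show "(\<lambda>n. Dpow m u n * cnj (v n)) summable_on UNIV"
    by (rule pairing_Dpow_summable[OF su sv])
  show "(\<lambda>n. mult_distr V u n * cnj (v n)) summable_on UNIV"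
    by (rule pairing_mult_distr_bound(1)[OF m sV su sv])
qed

theorem corollary1:
  fixes m :: nat and V :: "int \<Rightarrow> complex"
  assumes "m \<ge> 1"
    and "V \<in> sob Pplus (- real m)"
  shows "\<forall>P\<in>{Pplus, Pminus}.
           form_well_defined m V (sob P (real m)) \<and>
           densely_defined (sob P 0) (sob P (real m)) \<and>
           closed_form (sob P 0) (sob P (real m)) (form_t m V) \<and>
           sectorial_form (sob P 0) (sob P (real m)) (form_t m V)"
proof -
  have sV: "(\<lambda>k. (cmod (V k) / bracket k ^ m)\<^sup>2) summable_on UNIV"
    by (rule sob_neg_nat_summable[OF assms(2)])
  obtain C where "C \<ge> 0"
    and "\<And>u. hsummable m u \<Longrightarrow> cmod (pairing (mult_distr V u) u) \<le> 1 / 2 * dform m u + C * hnorm2 0 u"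
    using pairing_mult_distr_self_le[OF assms(1) sV, of "1 / 2"] by auto
  then have "form_well_defined m V (sob P (real m)) \<and>
           densely_defined (sob P 0) (sob P (real m)) \<and>
           closed_form (sob P 0) (sob P (real m)) (form_t m V) \<and>
           sectorial_form (sob P 0) (sob P (real m)) (form_t m V)" for P
    using form_t_well_defined[OF assms(1) sV] sob_nat_dense form_t_closed form_t_sectorial by blast
  then show ?thesis by blast
qed

end
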